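(* Let $\mathsf{R}$ be a commutative ring and let $f = \sum_{k=1}^t a_k \mathbf{x}^{\mathbf{e}_k} \in \mathsf{R}[x_1,\ldots,x_n]$ with nonzero $a_k$, pairwise distinct exponent vectors $\mathbf{e}_k\in\mathbb{Z}_{\ge 0}^n$, max degree less than $D$, and $t\le T$. Let $0<\mu<1$ and let $1\le i\le t$ be the index of a term of $f$. Let $\lambda$ be the least prime number with $\lambda \ge T/\mu$. If integers $s_1,\ldots,s_n$ are chosen independently and uniformly at random from $\{0,1,\ldots,\lambda-1\}$, then the probability that the $i$th term of $f$ collides in $f(z^{s_1},\ldots,z^{s_n})$ is less than $\mu$.
   Context: Here $\mathbf{x}^{\mathbf{e}} = x_1^{e_1}\cdots x_n^{e_n}$. "Max degree less than $D$" means every variable occurs in $f$ with exponent less than $D$. For $\mathbf{s}=(s_1,\ldots,s_n)$, the $i$th term of $f$ collides in the substitution $f(z^{s_1},\ldots,z^{s_n})$ if there exists $j\neq i$ with $\mathbf{e}_i\cdot\mathbf{s} = \mathbf{e}_j\cdot\mathbf{s}$. *)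

theory Defs
  imports "HOL-Probability.Probability" "HOL-Computational_Algebra.Primes"
begin

text \<open>The sparse polynomial f = sum_{k=1..t} a k * x^(e k) in n variables is represented
by its coefficient function a and exponent vectors e k (entries e k v for v < n).
Exponent of z for term k in the substitution x_v := z^(s v):\<close>

definition subst_exp :: "nat \<Rightarrow> (nat \<Rightarrow> nat) \<Rightarrow> (nat \<Rightarrow> nat) \<Rightarrow> nat" where
  "subst_exp n ek s = (\<Sum>v<n. ek v * s v)"

definition collides :: "nat \<Rightarrow> nat \<Rightarrow> (nat \<Rightarrow> nat \<Rightarrow> nat) \<Rightarrow> nat \<Rightarrow> (nat \<Rightarrow> nat) \<Rightarrow> bool" where
  "collides n t e i s \<longleftrightarrow> (\<exists>j\<in>{1..t}. j \<noteq> i \<and> subst_exp n (e i) s = subst_exp n (e j) s)"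

end

theory Submission
  imports Defs
begin

text \<open>Fix all coordinates of s except one coordinate v with e_i v \<noteq> e_j v. Then
  e_i \<cdot> s = e_j \<cdot> s is a linear equation in s v with nonzero coefficient, so at most
  one of the \<lambda> values of s v solves it; hence a fixed other term collides with the
  i-th one with probability at most 1/\<lambda>, and by the union bound over the other t - 1
  terms the i-th term collides with probability at most (t - 1)/\<lambda> < T/\<lambda> \<le> \<mu>.\<close>

lemma linear_eq_nat_unique:
  fixes a b c d x y :: nat
  assumes "a * x + c = b * x + d" "a * y + c = b * y + d" "a \<noteq> b"
  shows "x = y"
proof -
  have "(int a - int b) * (int x - int y) = 0"
    using arg_cong[OF assms(1), of int] arg_cong[OF assms(2), of int]
    by (simp add: algebra_simps)
  with assms(3) show ?thesis by simp
qed

lemma subst_exp_remove: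
  assumes "v < n"
  shows "subst_exp n d s = d v * s v + (\<Sum>u\<in>{..<n}-{v}. d u * s u)"
  unfolding subst_exp_def using assms by (simp add: sum.remove[of "{..<n}" v])

lemma card_subst_exp_eq_le:
  assumes v: "v < n" and dv: "d1 v \<noteq> d2 v"
  shows "card (PiE {..<n} (\<lambda>_. {..<L}) \<inter> {s. subst_exp n d1 s = subst_exp n d2 s}) * L
           \<le> L ^ n"
proof -
  let ?B = "PiE {..<n} (\<lambda>_. {..<L}) \<inter> {s. subst_exp n d1 s = subst_exp n d2 s}"
  let ?V = "{..<n} - {v}"
  let ?r = "\<lambda>s. restrict s ?V"
  have inj: "inj_on ?r ?B"
  proof (rule inj_onI)
    fix s s' assume s: "s \<in> ?B" and s': "s' \<in> ?B" and eq: "?r s = ?r s'"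
    have other: "s u = s' u" if "u \<in> ?V" for u
      using eq that by (metis restrict_apply')
    have rest: "(\<Sum>u\<in>?V. d u * s u) = (\<Sum>u\<in>?V. d u * s' u)" for d
      using other by simp
    have "s v = s' v"
      using s s' subst_exp_remove[OF v] rest dv by (auto intro: linear_eq_nat_unique)
    show "s = s'"
    proof
      fix u
      show "s u = s' u"
        using other \<open>s v = s' v\<close> s s' by (cases "u \<in> ?V") (auto simp: PiE_def extensional_def)
    qed
  qed
  have "card ?B = card (?r ` ?B)"
    using inj by (rule card_image[symmetric])
  also have "\<dots> \<le> card (PiE ?V (\<lambda>_. {..<L}))"
    by (rule card_mono) (simp add: finite_PiE, auto simp: PiE_def Pi_def)
  also have "\<dots> = L ^ (n - 1)"
    using v by (simp add: card_PiE)
  finally have "card ?B * L \<le> L ^ (n - 1) * L"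
    by (rule mult_le_mono1)
  also have "\<dots> = L ^ n"
    using v by (simp add: power_eq_if[of L n])
  finally show ?thesis .
qed

lemma prob_collides_le:
  assumes distinct: "\<forall>k\<in>{1..t}. \<forall>l\<in>{1..t}. k \<noteq> l \<longrightarrow> (\<exists>v<n. e k v \<noteq> e l v)"
    and i: "i \<in> {1..t}" and L: "L > 0"
  shows "measure_pmf.prob (pmf_of_set (PiE {..<n} (\<lambda>_. {..<L}))) {s. collides n t e i s}
           \<le> real (t - 1) / real L"
proof -
  define S where "S = PiE {..<n} (\<lambda>(_::nat). {..<L})"
  define J where "J = {1..t} - {i}"
  have "S \<noteq> {}" "finite S" "card S = L ^ n"
    using L by (auto simp: S_def PiE_eq_empty_iff card_PiE finite_PiE)
  have collision_set: "S \<inter> {s. collides n t e i s}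
      = (\<Union>j\<in>J. S \<inter> {s. subst_exp n (e i) s = subst_exp n (e j) s})"
    unfolding collides_def J_def by auto
  have pair: "card (S \<inter> {s. subst_exp n (e i) s = subst_exp n (e j) s}) * L \<le> L ^ n"
    if "j \<in> J" for j
  proof -
    obtain v where "v < n" "e i v \<noteq> e j v"
      using distinct i \<open>j \<in> J\<close> unfolding J_def by (metis DiffE singletonI)
    then show ?thesis unfolding S_def by (rule card_subst_exp_eq_le)
  qed
  have "card (S \<inter> {s. collides n t e i s}) * L
      \<le> (\<Sum>j\<in>J. card (S \<inter> {s. subst_exp n (e i) s = subst_exp n (e j) s})) * L"
    unfolding collision_set by (intro mult_le_mono1 card_UN_le) (simp add: J_def)
  also have "\<dots> \<le> (\<Sum>j\<in>J. L ^ n)"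
    unfolding sum_distrib_right by (intro sum_mono pair)
  also have "\<dots> = (t - 1) * L ^ n"
    using i by (simp add: J_def)
  finally have count: "real (card (S \<inter> {s. collides n t e i s})) * real L
      \<le> real (t - 1) * real L ^ n"
    by (metis of_nat_le_iff of_nat_mult of_nat_power)
  have "measure_pmf.prob (pmf_of_set S) {s. collides n t e i s}
      = real (card (S \<inter> {s. collides n t e i s})) / real L ^ n"
    using measure_pmf_of_set[OF \<open>S \<noteq> {}\<close> \<open>finite S\<close>] \<open>card S = L ^ n\<close> by simp
  also have "\<dots> \<le> real (t - 1) / real L"
    using count L by (simp add: divide_simps mult.commute)
  finally show ?thesis
    unfolding S_def .
qed

lemma least_prime_ge:
  fixes x :: real
  defines "p \<equiv> LEAST p::nat. prime p \<and> real p \<ge> x"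
  shows "prime p" "real p \<ge> x"
proof -
  obtain q :: nat where q: "prime q" "q > nat \<lceil>x\<rceil>"
    using bigger_prime by blast
  have "x \<le> real (nat \<lceil>x\<rceil>)"
    by (rule real_nat_ceiling_ge)
  with q have "prime q \<and> real q \<ge> x"
    by simp
  then have "prime p \<and> real p \<ge> x"
    unfolding p_def by (rule LeastI)
  then show "prime p" "real p \<ge> x" by auto
qed

theorem lemma3p3:
  fixes a :: "nat \<Rightarrow> 'r::comm_ring_1"
    and e :: "nat \<Rightarrow> nat \<Rightarrow> nat"
    and n t T D i :: nat
    and \<mu> :: real
  assumes nonzero: "\<forall>k\<in>{1..t}. a k \<noteq> 0"
    and distinct: "\<forall>k\<in>{1..t}. \<forall>l\<in>{1..t}. k \<noteq> l \<longrightarrow> (\<exists>v<n. e k v \<noteq> e l v)"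
    and maxdeg: "\<forall>k\<in>{1..t}. \<forall>v<n. e k v < D"
    and tT: "t \<le> T"
    and mu: "0 < \<mu>" "\<mu> < 1"
    and i: "1 \<le> i" "i \<le> t"
  shows "measure_pmf.prob
           (pmf_of_set (PiE {..<n} (\<lambda>_. {..<(LEAST p::nat. prime p \<and> real p \<ge> real T / \<mu>)})))
           {s. collides n t e i s} < \<mu>"
proof -
  define p where "p = (LEAST p::nat. prime p \<and> real p \<ge> real T / \<mu>)"
  have "prime p" "real p \<ge> real T / \<mu>"
    unfolding p_def by (rule least_prime_ge)+
  then have "p > 0" "real T \<le> \<mu> * real p"
    using mu by (simp_all add: prime_gt_0_nat divide_le_eq mult.commute)
  have "measure_pmf.prob (pmf_of_set (PiE {..<n} (\<lambda>_. {..<p}))) {s. collides n t e i s}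
      \<le> real (t - 1) / real p"
    using distinct i \<open>p > 0\<close> by (intro prob_collides_le) auto
  also have "\<dots> < \<mu>"
    using tT i \<open>p > 0\<close> \<open>real T \<le> \<mu> * real p\<close> by (simp add: divide_less_eq of_nat_diff)
  finally show ?thesis unfolding p_def .
qed

end
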